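(* Let $\tilde{\boldsymbol\Gamma}^\omega$ denote the fundamental solution $\boldsymbol\Gamma^\omega$ with the parameters $(\lambda,\mu,\rho)$ replaced by $(\tilde\lambda,\tilde\mu,\tilde\rho)=(\lambda/\delta,\mu/\delta,\rho/\epsilon)$, and let $\tau=\sqrt{\delta/\epsilon}$. Then as $\omega\to0^+$, $$\tilde{\boldsymbol\Gamma}^\omega(\mathbf{x})=\delta\boldsymbol\Gamma(\mathbf{x})+\delta\gamma_{\tau\omega}\mathbf{I}_2+\delta\omega^2\ln\omega\,\rho\tau^2\boldsymbol\Gamma_1(\mathbf{x})+\delta\omega^2\rho\tau^2\ln(\sqrt\rho\tau)\boldsymbol\Gamma_1(\mathbf{x})+\delta\omega^2\rho\tau^2\boldsymbol\Gamma_2(\mathbf{x})+\mathcal{O}(\delta\tau^4\omega^4\ln\omega+\delta\tau^4\omega^4),$$ where $\gamma_{\tau\omega}=\alpha_1\ln(\sqrt\rho\tau\omega)+\alpha$.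
   Context: Lamé constants $\lambda,\mu$, density $\rho>0$, $\delta,\epsilon>0$. For parameters $(\lambda,\mu,\rho)$, $c_s=\sqrt{\mu/\rho}$, $c_p=\sqrt{(\lambda+2\mu)/\rho}$, $k_s=\omega/c_s$, $k_p=\omega/c_p$, and $\boldsymbol\Gamma^\omega(\mathbf{x})=-\frac{\mathrm{i}}{4\mu}H_0^{(1)}(k_s|\mathbf{x}|)\mathbf{I}_2+\frac{\mathrm{i}}{4\omega^2\rho}\nabla\nabla\big(H_0^{(1)}(k_p|\mathbf{x}|)-H_0^{(1)}(k_s|\mathbf{x}|)\big)$. $\boldsymbol\Gamma(\mathbf{x})=\alpha_1\ln|\mathbf{x}|\mathbf{I}_2-\alpha_2\frac{\mathbf{x}\mathbf{x}^T}{|\mathbf{x}|^2}$, $\alpha_1=\frac1{4\pi}(\frac1\mu+\frac1{2\mu+\lambda})$, $\alpha_2=\frac1{4\pi}(\frac1\mu-\frac1{2\mu+\lambda})$; $E_c=2\gamma-\mathrm{i}\pi-2\ln2$; $\alpha=\frac{\alpha_1}2E_c+\frac{\alpha_2}2-\frac1{8\pi}(\frac1\mu\ln\mu+\frac1{2\mu+\lambda}\ln(2\mu+\lambda))$. $\boldsymbol\Gamma_1(\mathbf{x})=\beta_2|\mathbf{x}|^2\mathbf{I}_2+\beta_3\mathbf{x}\mathbf{x}^T$, $\boldsymbol\Gamma_2(\mathbf{x})=\beta_1|\mathbf{x}|^2\mathbf{I}_2+\beta_2\ln|\mathbf{x}||\mathbf{x}|^2\mathbf{I}_2+\beta_3\ln|\mathbf{x}|\mathbf{x}\mathbf{x}^T+\beta_4\mathbf{x}\mathbf{x}^T$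 with $\beta_2=-\frac1{2^5\pi}(\frac3{\mu^2}+\frac1{(2\mu+\lambda)^2})$, $\beta_3=\frac1{2^4\pi}(\frac1{\mu^2}-\frac1{(2\mu+\lambda)^2})$, $\beta_1=(\frac12E_c-1)\beta_2-\frac18\beta_3+\frac1{2^6\pi}(\frac3{\mu^2}\ln\mu+\frac{\ln(2\mu+\lambda)}{(2\mu+\lambda)^2})$, $\beta_4=\frac14(2E_c-3)\beta_3-\frac1{2^5\pi}(\frac{\ln\mu}{\mu^2}-\frac{\ln(2\mu+\lambda)}{(2\mu+\lambda)^2})$ (all with the unscaled $\lambda,\mu$). *)

theory Defs
  imports "HOL-Analysis.Analysis"
begin

definition bessel_J0 :: "real \<Rightarrow> real" where
  "bessel_J0 z = (\<Sum>k. (-1) ^ k * (z / 2) ^ (2 * k) / (fact k) ^ 2)"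

definition bessel_Y0 :: "real \<Rightarrow> real" where
  "bessel_Y0 z = (2 / pi) * (ln (z / 2) + euler_mascheroni) * bessel_J0 z
     + (2 / pi) * (\<Sum>k. (-1) ^ (k + 2) * harm (k + 1) * (z / 2) ^ (2 * (k + 1)) / (fact (k + 1)) ^ 2)"

definition hankel1_0 :: "real \<Rightarrow> complex" where
  "hankel1_0 z = Complex (bessel_J0 z) (bessel_Y0 z)"

definition partial_deriv :: "2 \<Rightarrow> (real^2 \<Rightarrow> complex) \<Rightarrow> real^2 \<Rightarrow> complex" where
  "partial_deriv i g x = vector_derivative (\<lambda>t. g (x + t *\<^sub>R axis i 1)) (at 0)"

definition hessian :: "(real^2 \<Rightarrow> complex) \<Rightarrow> real^2 \<Rightarrow> complex^2^2" where
  "hessian g x = (\<chi> i j. partial_deriv i (partial_deriv j g) x)"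

definition Gamma_omega :: "real \<Rightarrow> real \<Rightarrow> real \<Rightarrow> real \<Rightarrow> real^2 \<Rightarrow> complex^2^2" where
  "Gamma_omega lam mu rho \<omega> x =
     (let cs = sqrt (mu / rho); cp = sqrt ((lam + 2 * mu) / rho);
          ks = \<omega> / cs; kp = \<omega> / cp;
          H = hessian (\<lambda>y. hankel1_0 (kp * norm y) - hankel1_0 (ks * norm y)) x
      in (\<chi> i j. - (\<i> / (4 * complex_of_real mu)) * hankel1_0 (ks * norm x) * (if i = j then 1 else 0)
                  + \<i> / (4 * complex_of_real (\<omega>^2 * rho)) * H $ i $ j))"

definition alpha1 :: "real \<Rightarrow> real \<Rightarrow> real" where
  "alpha1 lam mu = 1 / (4 * pi) * (1 / mu + 1 / (2 * mu + lam))"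

definition alpha2 :: "real \<Rightarrow> real \<Rightarrow> real" where
  "alpha2 lam mu = 1 / (4 * pi) * (1 / mu - 1 / (2 * mu + lam))"

definition E_c :: complex where
  "E_c = 2 * euler_mascheroni - \<i> * pi - 2 * ln 2"

definition alpha_const :: "real \<Rightarrow> real \<Rightarrow> complex" where
  "alpha_const lam mu = alpha1 lam mu / 2 * E_c + alpha2 lam mu / 2
     - 1 / (8 * pi) * (1 / mu * ln mu + 1 / (2 * mu + lam) * ln (2 * mu + lam))"

definition Gamma0 :: "real \<Rightarrow> real \<Rightarrow> real^2 \<Rightarrow> complex^2^2" where
  "Gamma0 lam mu x = (\<chi> i j. complex_of_real
     (alpha1 lam mu * ln (norm x) * (if i = j then 1 else 0)
      - alpha2 lam mu * (x $ i * x $ j) / (norm x)^2))"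

definition beta2 :: "real \<Rightarrow> real \<Rightarrow> real" where
  "beta2 lam mu = - 1 / (2^5 * pi) * (3 / mu^2 + 1 / (2 * mu + lam)^2)"

definition beta3 :: "real \<Rightarrow> real \<Rightarrow> real" where
  "beta3 lam mu = 1 / (2^4 * pi) * (1 / mu^2 - 1 / (2 * mu + lam)^2)"

definition beta1 :: "real \<Rightarrow> real \<Rightarrow> complex" where
  "beta1 lam mu = (E_c / 2 - 1) * beta2 lam mu - beta3 lam mu / 8
     + 1 / (2^6 * pi) * (3 / mu^2 * ln mu + ln (2 * mu + lam) / (2 * mu + lam)^2)"

definition beta4 :: "real \<Rightarrow> real \<Rightarrow> complex" where
  "beta4 lam mu = 1 / 4 * (2 * E_c - 3) * beta3 lam mu
     - 1 / (2^5 * pi) * (ln mu / mu^2 - ln (2 * mu + lam) / (2 * mu + lam)^2)"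

definition Gamma1 :: "real \<Rightarrow> real \<Rightarrow> real^2 \<Rightarrow> complex^2^2" where
  "Gamma1 lam mu x = (\<chi> i j. complex_of_real
     (beta2 lam mu * (norm x)^2 * (if i = j then 1 else 0) + beta3 lam mu * (x $ i * x $ j)))"

definition Gamma2 :: "real \<Rightarrow> real \<Rightarrow> real^2 \<Rightarrow> complex^2^2" where
  "Gamma2 lam mu x = (\<chi> i j.
     beta1 lam mu * (norm x)^2 * (if i = j then 1 else 0)
     + beta2 lam mu * ln (norm x) * (norm x)^2 * (if i = j then 1 else 0)
     + beta3 lam mu * ln (norm x) * (x $ i * x $ j)
     + beta4 lam mu * (x $ i * x $ j))"

end

(*
  In the squared variable u = z^2 the Hankel function H(u) = H_0^(1)(sqrt u) is a power series
  in u plus (2i/pi) (ln u / 2 - ln 2 + gamma) times another power series.  Hence u H(u), u H'(u)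
  and u^2 H''(u) are explicit polynomials of degree 2 in u and ln u up to O(u^3 ln u) as u -> 0+.
  Since the Hessian of a radial function G(|y|^2) is 2 G'(s) I + 4 G''(s) x x^T, every entry of
  the fundamental solution is a fixed linear combination of these three functions at
  u = k_s^2 |x|^2 and u = k_p^2 |x|^2, divided by 4 omega^2 rho |x|^2.  For the scaled parameters
  both arguments are proportional to kappa^2 with kappa = sqrt rho tau omega.  The polynomial
  parts reproduce exactly the stated expansion (an algebraic identity in kappa and ln kappa),
  and the remainders are O(omega^6 ln omega) / omega^2.
*)

theory Submission
  imports Defs "HOL-Library.Landau_Symbols" "HOL-Real_Asymp.Real_Asymp"
begin

definition pseries :: "(nat \<Rightarrow> real) \<Rightarrow> real \<Rightarrow> real" where
  "pseries c u = (\<Sum>n. c n * u ^ n)"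

definition entire_coeffs :: "(nat \<Rightarrow> real) \<Rightarrow> bool" where
  "entire_coeffs c \<longleftrightarrow> (\<forall>u. summable (\<lambda>n. c n * u ^ n))"

definition pseries_rem :: "(nat \<Rightarrow> real) \<Rightarrow> nat \<Rightarrow> real \<Rightarrow> real" where
  "pseries_rem c m u = pseries c u - (\<Sum>n<m. c n * u ^ n)"

lemma entire_coeffs_if_le_inverse_fact:
  assumes "\<And>n. \<bar>c n\<bar> \<le> inverse (fact n)"
  shows "entire_coeffs c"
  unfolding entire_coeffs_def
proof
  fix u :: real
  have "norm (c n * u ^ n) \<le> inverse (fact n) * \<bar>u\<bar> ^ n" for n
    using mult_right_mono[OF assms[of n], of "\<bar>u\<bar> ^ n"] by (simp add: abs_mult power_abs)
  with summable_exp[of "\<bar>u\<bar>"] show "summable (\<lambda>n. c n * u ^ n)"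
    by (rule summable_comparison_test'[where N = 0])
qed

lemma entire_coeffs_diffs: "entire_coeffs c \<Longrightarrow> entire_coeffs (diffs c)"
  unfolding entire_coeffs_def by (blast intro: termdiff_converges_all)

lemma entire_coeffs_shift:
  assumes "entire_coeffs c"
  shows "entire_coeffs (\<lambda>n. c (n + m))"
  unfolding entire_coeffs_def
proof
  fix u :: real
  show "summable (\<lambda>n. c (n + m) * u ^ n)"
  proof (cases "u = 0")
    case False
    have "summable (\<lambda>n. c (n + m) * u ^ (n + m) * inverse (u ^ m))"
      using summable_ignore_initial_segment[of "\<lambda>n. c n * u ^ n" m] assms
      by (intro summable_mult2) (simp add: entire_coeffs_def)
    with False show ?thesis by (simp add: power_add field_simps)
  qed (simp add: summable_0_powser)
qed

lemma pseries_has_real_derivative: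
  "entire_coeffs c \<Longrightarrow> (pseries c has_real_derivative pseries (diffs c) u) (at u)"
  unfolding pseries_def entire_coeffs_def by (rule termdiffs_strong_converges_everywhere) blast

lemma pseries_rem_eq:
  assumes "entire_coeffs c"
  shows "pseries_rem c m u = u ^ m * pseries (\<lambda>n. c (n + m)) u"
proof -
  have "summable (\<lambda>n. c n * u ^ n)" "summable (\<lambda>n. c (n + m) * u ^ n)"
    using assms entire_coeffs_shift[OF assms] by (simp_all add: entire_coeffs_def)
  then have "pseries c u = (\<Sum>n. u ^ m * (c (n + m) * u ^ n)) + (\<Sum>n<m. c n * u ^ n)"
    unfolding pseries_def by (subst suminf_split_initial_segment[of _ m]) (simp_all add: power_add mult_ac)
  also have "(\<Sum>n. u ^ m * (c (n + m) * u ^ n)) = u ^ m * pseries (\<lambda>n. c (n + m)) u"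
    unfolding pseries_def by (rule suminf_mult) fact
  finally show ?thesis unfolding pseries_rem_def by simp
qed

lemma pseries_rem_bigo:
  assumes "entire_coeffs c"
  shows "pseries_rem c m \<in> O[at_right 0](\<lambda>u. u ^ m)"
proof -
  let ?d = "\<lambda>n. c (n + m)"
  have "isCont (pseries ?d) 0"
    using entire_coeffs_shift[OF assms, of m] isCont_powser_converges_everywhere[of ?d 0]
    unfolding pseries_def[abs_def] entire_coeffs_def by blast
  then have "((pseries ?d) \<longlongrightarrow> pseries ?d 0) (at_right 0)"
    by (simp add: isCont_def filterlim_at_split)
  then have "pseries ?d \<in> O[at_right 0](\<lambda>_. 1)"
    by (intro bigoI_tendsto[where c = "pseries ?d 0"]) simp_all
  then have "(\<lambda>u. u ^ m * pseries ?d u) \<in> O[at_right 0](\<lambda>u. u ^ m * 1)"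
    by (rule landau_o.big.mult_left)
  moreover have "pseries_rem c m = (\<lambda>u. u ^ m * pseries ?d u)"
    using pseries_rem_eq[OF assms] by (intro ext) simp
  ultimately show ?thesis by simp
qed

section \<open>The Hankel function in the squared variable\<close>

definition J0_coeff :: "nat \<Rightarrow> real" where
  "J0_coeff n = (-1) ^ n / (4 ^ n * (fact n)\<^sup>2)"

definition Y0_coeff :: "nat \<Rightarrow> real" where
  "Y0_coeff n = (if n = 0 then 0 else (-1) ^ (n + 1) * harm n / (4 ^ n * (fact n)\<^sup>2))"

lemma entire_coeffs_J0_coeff: "entire_coeffs J0_coeff"
proof (rule entire_coeffs_if_le_inverse_fact)
  fix n
  have "fact n \<le> (fact n :: real)\<^sup>2" by (simp add: power2_eq_square)
  also have "\<dots> \<le> 4 ^ n * (fact n)\<^sup>2" by simp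
  finally show "\<bar>J0_coeff n\<bar> \<le> inverse (fact n)"
    by (simp add: J0_coeff_def abs_mult power_abs divide_simps)
qed

lemma harm_le_of_nat: "harm n \<le> (real n)"
  unfolding harm_def by (rule order_trans[OF sum_mono[of _ _ "\<lambda>_. 1"]]) (auto simp: inverse_le_1_iff)

lemma entire_coeffs_Y0_coeff: "entire_coeffs Y0_coeff"
proof (rule entire_coeffs_if_le_inverse_fact)
  fix n
  have "harm n \<le> (fact n :: real)"
    using harm_le_of_nat[of n] fact_ge_self[of n] by (metis of_nat_fact of_nat_le_iff order_trans)
  then have "harm n / (4 ^ n * (fact n)\<^sup>2) \<le> fact n / (4 ^ n * (fact n :: real)\<^sup>2)"
    by (simp add: divide_right_mono)
  also have "\<dots> \<le> inverse (fact n)"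
    by (simp add: power2_eq_square divide_simps)
  finally have "harm n / (4 ^ n * (fact n)\<^sup>2) \<le> inverse (fact n :: real)" .
  moreover have "\<bar>Y0_coeff n\<bar> \<le> harm n / (4 ^ n * (fact n)\<^sup>2)"
    by (simp add: Y0_coeff_def abs_mult power_abs harm_nonneg)
  ultimately show "\<bar>Y0_coeff n\<bar> \<le> inverse (fact n)" by linarith
qed

lemma half_power_double_eq: "(z / 2) ^ (2 * k) = (z\<^sup>2) ^ k / (4::real) ^ k"
  by (simp add: power_mult power_divide)

lemma bessel_J0_eq_pseries: "bessel_J0 z = pseries J0_coeff (z\<^sup>2)"
  unfolding bessel_J0_def pseries_def J0_coeff_def by (simp add: half_power_double_eq)

lemma bessel_Y0_eq_pseries:
  "bessel_Y0 z = 2 / pi * ((ln (z / 2) + euler_mascheroni) * pseries J0_coeff (z\<^sup>2) + pseries Y0_coeff (z\<^sup>2))"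
proof -
  have "summable (\<lambda>n. Y0_coeff n * (z\<^sup>2) ^ n)"
    using entire_coeffs_Y0_coeff by (simp add: entire_coeffs_def)
  from suminf_split_head[OF this]
  have "(\<Sum>k. (-1) ^ (k + 2) * harm (k + 1) * (z / 2) ^ (2 * (k + 1)) / (fact (k + 1))\<^sup>2)
      = pseries Y0_coeff (z\<^sup>2)"
    unfolding pseries_def by (simp only: half_power_double_eq[of z "k + 1" for k]) (simp add: Y0_coeff_def)
  then show ?thesis unfolding bessel_Y0_def bessel_J0_eq_pseries by (simp add: algebra_simps)
qed

(* H0_sq u = H_0^(1)(sqrt u); the only non-analytic part is the logarithm Y0_log u = ln (sqrt u / 2) + gamma. *)

definition Y0_log :: "real \<Rightarrow> real" where
  "Y0_log u = ln u / 2 - ln 2 + euler_mascheroni"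

definition H0_sq :: "real \<Rightarrow> complex" where
  "H0_sq u = Complex (pseries J0_coeff u)
     (2 / pi * (Y0_log u * pseries J0_coeff u + pseries Y0_coeff u))"

definition H0_sq' :: "real \<Rightarrow> complex" where
  "H0_sq' u = Complex (pseries (diffs J0_coeff) u)
     (2 / pi * (pseries J0_coeff u / (2 * u) + Y0_log u * pseries (diffs J0_coeff) u
                + pseries (diffs Y0_coeff) u))"

definition H0_sq'' :: "real \<Rightarrow> complex" where
  "H0_sq'' u = Complex (pseries (diffs (diffs J0_coeff)) u)
     (2 / pi * (- pseries J0_coeff u / (2 * u\<^sup>2) + pseries (diffs J0_coeff) u / u
                + Y0_log u * pseries (diffs (diffs J0_coeff)) u + pseries (diffs (diffs Y0_coeff)) u))"

lemma hankel1_0_sqrt: "u > 0 \<Longrightarrow> hankel1_0 (sqrt u) = H0_sq u"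
  unfolding hankel1_0_def H0_sq_def bessel_J0_eq_pseries bessel_Y0_eq_pseries Y0_log_def
  by (simp add: ln_div ln_sqrt algebra_simps)

lemmas entire_coeffs_J0_Y0 = entire_coeffs_J0_coeff entire_coeffs_Y0_coeff
  entire_coeffs_diffs[OF entire_coeffs_J0_coeff] entire_coeffs_diffs[OF entire_coeffs_Y0_coeff]
  entire_coeffs_diffs[OF entire_coeffs_diffs[OF entire_coeffs_J0_coeff]]
  entire_coeffs_diffs[OF entire_coeffs_diffs[OF entire_coeffs_Y0_coeff]]

lemma Complex_has_vector_derivative:
  assumes "(f has_real_derivative f') (at u)" "(g has_real_derivative g') (at u)"
  shows "((\<lambda>u. Complex (f u) (g u)) has_vector_derivative Complex f' g') (at u)"
  using assms unfolding Complex_eq by (auto intro!: derivative_eq_intros)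

lemma H0_sq_has_vector_derivative:
  "u > 0 \<Longrightarrow> (H0_sq has_vector_derivative H0_sq' u) (at u)"
  unfolding H0_sq_def[abs_def] H0_sq'_def Y0_log_def
  by (intro Complex_has_vector_derivative)
     (auto intro!: derivative_eq_intros pseries_has_real_derivative entire_coeffs_J0_Y0
       simp: field_simps)

lemma H0_sq'_has_vector_derivative:
  "u > 0 \<Longrightarrow> (H0_sq' has_vector_derivative H0_sq'' u) (at u)"
  unfolding H0_sq'_def[abs_def] H0_sq''_def Y0_log_def
  by (intro Complex_has_vector_derivative)
     (auto intro!: derivative_eq_intros pseries_has_real_derivative entire_coeffs_J0_Y0
       simp: field_simps power2_eq_square)

section \<open>The fundamental solution in terms of the Hankel function\<close>

lemma inner_self_line_has_vector_derivative:
  fixes y a :: "'a::real_inner"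
  shows "((\<lambda>t. (y + t *\<^sub>R a) \<bullet> (y + t *\<^sub>R a)) has_vector_derivative 2 * (y \<bullet> a) + 2 * t * (a \<bullet> a)) (at t)"
proof -
  have "(\<lambda>t. (y + t *\<^sub>R a) \<bullet> (y + t *\<^sub>R a)) = (\<lambda>t. y \<bullet> y + 2 * t * (y \<bullet> a) + t\<^sup>2 * (a \<bullet> a))"
    by (rule ext) (simp add: inner_add_left inner_add_right inner_commute power2_eq_square algebra_simps)
  moreover have "((\<lambda>t. y \<bullet> y + 2 * t * (y \<bullet> a) + t\<^sup>2 * (a \<bullet> a)) has_real_derivative 2 * (y \<bullet> a) + 2 * t * (a \<bullet> a)) (at t)"
    by (auto intro!: derivative_eq_intros simp: algebra_simps)
  ultimately show ?thesis by (simp add: has_real_derivative_iff_has_vector_derivative)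
qed

lemma partial_deriv_radial:
  fixes G G' :: "real \<Rightarrow> complex" and y :: "real^2"
  assumes "y \<noteq> 0" and G': "\<And>s. s > 0 \<Longrightarrow> (G has_vector_derivative G' s) (at s)"
  shows "partial_deriv j (\<lambda>y. G (y \<bullet> y)) y = of_real (2 * y $ j) * G' (y \<bullet> y)"
proof -
  let ?l = "\<lambda>t. (y + t *\<^sub>R axis j 1) \<bullet> (y + t *\<^sub>R axis j 1)"
  have "(?l has_vector_derivative 2 * y $ j) (at 0)"
    using inner_self_line_has_vector_derivative[of y "axis j 1" 0] by (simp add: inner_axis)
  moreover have "(G has_vector_derivative G' (?l 0)) (at (?l 0))"
    using G' assms(1) by simp
  ultimately have "((G \<circ> ?l) has_vector_derivative (2 * y $ j) *\<^sub>R G' (?l 0)) (at 0)"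
    by (rule vector_diff_chain_at)
  then show ?thesis
    unfolding partial_deriv_def by (simp add: vector_derivative_at o_def scaleR_conv_of_real)
qed

lemma hessian_radial:
  fixes G G' G'' :: "real \<Rightarrow> complex" and x :: "real^2"
  assumes "x \<noteq> 0"
    and G': "\<And>s. s > 0 \<Longrightarrow> (G has_vector_derivative G' s) (at s)"
    and G'': "\<And>s. s > 0 \<Longrightarrow> (G' has_vector_derivative G'' s) (at s)"
  shows "hessian (\<lambda>y. G (y \<bullet> y)) x $ i $ j =
     of_real (2 * (if i = j then 1 else 0)) * G' (x \<bullet> x) + of_real (4 * (x $ i * x $ j)) * G'' (x \<bullet> x)"
proof -
  let ?p = "\<lambda>t. x + t *\<^sub>R axis i 1"
  let ?F = "\<lambda>t. of_real (2 * (x $ j + t * (if i = j then 1 else 0))) * G' (?p t \<bullet> ?p t)"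
  have eq: "partial_deriv j (\<lambda>y. G (y \<bullet> y)) (?p t) = ?F t" if "t \<in> ball 0 (norm x)" for t
  proof -
    have "?p t \<noteq> 0"
    proof
      assume "?p t = 0"
      then have "x = - (t *\<^sub>R axis i 1)" by (simp add: eq_neg_iff_add_eq_0)
      then have "norm x = \<bar>t\<bar>" by simp
      with that show False by simp
    qed
    then show ?thesis using partial_deriv_radial[OF _ G', of "?p t" j] by (simp add: axis_def)
  qed
  have "((\<lambda>t. ?p t \<bullet> ?p t) has_vector_derivative 2 * x $ i) (at 0)"
    using inner_self_line_has_vector_derivative[of x "axis i 1" 0] by (simp add: inner_axis)
  moreover have "(G' has_vector_derivative G'' (?p 0 \<bullet> ?p 0)) (at (?p 0 \<bullet> ?p 0))"
    using G'' assms(1) by simp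
  ultimately have "((G' \<circ> (\<lambda>t. ?p t \<bullet> ?p t)) has_vector_derivative (2 * x $ i) *\<^sub>R G'' (?p 0 \<bullet> ?p 0)) (at 0)"
    by (rule vector_diff_chain_at)
  then have F_deriv: "(?F has_vector_derivative
      of_real (2 * x $ j) * of_real (2 * x $ i) * G'' (x \<bullet> x)
      + of_real (2 * (if i = j then 1 else 0)) * G' (x \<bullet> x)) (at 0)"
    by (auto intro!: derivative_eq_intros simp: o_def scaleR_conv_of_real algebra_simps)
  have "((\<lambda>t. partial_deriv j (\<lambda>y. G (y \<bullet> y)) (?p t)) has_vector_derivative
      of_real (2 * x $ j) * of_real (2 * x $ i) * G'' (x \<bullet> x)
      + of_real (2 * (if i = j then 1 else 0)) * G' (x \<bullet> x)) (at 0)"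
    by (rule has_vector_derivative_transform_within_open[OF F_deriv, where S = "ball 0 (norm x)"])
       (use assms(1) eq in auto)
  then have "partial_deriv i (partial_deriv j (\<lambda>y. G (y \<bullet> y))) x =
      of_real (2 * x $ j) * of_real (2 * x $ i) * G'' (x \<bullet> x)
      + of_real (2 * (if i = j then 1 else 0)) * G' (x \<bullet> x)"
    unfolding partial_deriv_def[of i] by (rule vector_derivative_at)
  then show ?thesis
    unfolding hessian_def by (simp add: algebra_simps)
qed

(* By hessian_radial, Gamma_omega involves H0_sq only through u H, u H' and u^2 H'', evaluated
   at u = k_s^2 |x|^2 (argument us below) and u = k_p^2 |x|^2 (argument up). *)

definition W0 :: "real \<Rightarrow> complex" where "W0 u = of_real u * H0_sq u"
definition W1 :: "real \<Rightarrow> complex" where "W1 u = of_real u * H0_sq' u"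
definition W2 :: "real \<Rightarrow> complex" where "W2 u = of_real (u\<^sup>2) * H0_sq'' u"

definition kernel_comb ::
    "(real \<Rightarrow> complex) \<Rightarrow> (real \<Rightarrow> complex) \<Rightarrow> (real \<Rightarrow> complex) \<Rightarrow> real \<Rightarrow> real \<Rightarrow> real^2 \<Rightarrow> 2 \<Rightarrow> 2 \<Rightarrow> complex"
  where
  "kernel_comb F0 F1 F2 us up x i j =
     (if i = j then 1 else 0) * (2 * (F1 up - F1 us) - F0 us)
     + of_real (4 * (x $ i * x $ j) / (x \<bullet> x)) * (F2 up - F2 us)"

lemma kernel_comb_diff:
  "kernel_comb F0 F1 F2 us up x i j - kernel_comb G0 G1 G2 us up x i j =
   kernel_comb (\<lambda>u. F0 u - G0 u) (\<lambda>u. F1 u - G1 u) (\<lambda>u. F2 u - G2 u) us up x i j"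
  unfolding kernel_comb_def by (simp add: algebra_simps del: of_real_divide of_real_mult)

lemma has_vector_derivative_compose_scale:
  fixes H H' :: "real \<Rightarrow> complex"
  assumes "c > 0" "s > 0" "\<And>u. u > 0 \<Longrightarrow> (H has_vector_derivative H' u) (at u)"
  shows "((\<lambda>s. H (c * s)) has_vector_derivative of_real c * H' (c * s)) (at s)"
proof -
  have "((\<lambda>s. c * s) has_vector_derivative c) (at s)"
    using DERIV_cmult_Id has_real_derivative_iff_has_vector_derivative by blast
  then have "((H \<circ> (\<lambda>s. c * s)) has_vector_derivative c *\<^sub>R H' (c * s)) (at s)"
    by (rule vector_diff_chain_at) (use assms in simp)
  then show ?thesis by (simp add: o_def scaleR_conv_of_real)
qed

lemma Gamma_omega_entry_eq:
  assumes "mu > 0" "lam + 2 * mu > 0" "rho > 0" "\<omega> > 0" "x \<noteq> 0"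
  defines "t \<equiv> \<omega>\<^sup>2 * rho * (x \<bullet> x)"
  shows "Gamma_omega lam mu rho \<omega> x $ i $ j =
    \<i> / of_real (4 * t) * kernel_comb W0 W1 W2 (t / mu) (t / (lam + 2 * mu)) x i j"
proof -
  define ks where "ks = \<omega> / sqrt (mu / rho)"
  define kp where "kp = \<omega> / sqrt ((lam + 2 * mu) / rho)"
  have ks: "ks > 0" "ks\<^sup>2 = \<omega>\<^sup>2 * rho / mu" and kp: "kp > 0" "kp\<^sup>2 = \<omega>\<^sup>2 * rho / (lam + 2 * mu)"
    using assms by (simp_all add: ks_def kp_def power_divide)
  have hankel_sq: "hankel1_0 (k * sqrt s) = H0_sq (k\<^sup>2 * s)" if "k > 0" "s > 0" for k s
    using that by (simp add: real_sqrt_mult hankel1_0_sqrt[symmetric])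
  define G where "G s = hankel1_0 (kp * sqrt s) - hankel1_0 (ks * sqrt s)" for s
  define G' where "G' s = of_real (kp\<^sup>2) * H0_sq' (kp\<^sup>2 * s) - of_real (ks\<^sup>2) * H0_sq' (ks\<^sup>2 * s)" for s
  define G'' where "G'' s = of_real (kp\<^sup>2 * kp\<^sup>2) * H0_sq'' (kp\<^sup>2 * s) - of_real (ks\<^sup>2 * ks\<^sup>2) * H0_sq'' (ks\<^sup>2 * s)" for s
  have "(G has_vector_derivative G' s) (at s)" if "s > 0" for s
  proof -
    have "((\<lambda>s. H0_sq (kp\<^sup>2 * s) - H0_sq (ks\<^sup>2 * s)) has_vector_derivative G' s) (at s)"
      unfolding G'_def using ks(1) kp(1) that
      by (intro has_vector_derivative_diff has_vector_derivative_compose_scale H0_sq_has_vector_derivative) auto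
    then show ?thesis
      by (rule has_vector_derivative_transform_within_open[where S = "{0<..}"])
         (use that ks kp hankel_sq in \<open>auto simp: G_def\<close>)
  qed
  moreover have "(G' has_vector_derivative G'' s) (at s)" if "s > 0" for s
  proof -
    have "((\<lambda>s. of_real c * H0_sq' (c * s)) has_vector_derivative of_real c * (of_real c * H0_sq'' (c * s))) (at s)"
      if "c > 0" for c
      using that \<open>s > 0\<close>
      by (intro has_vector_derivative_mult_right has_vector_derivative_compose_scale H0_sq'_has_vector_derivative) auto
    from has_vector_derivative_diff[OF this[of "kp\<^sup>2"] this[of "ks\<^sup>2"]] ks(1) kp(1) show ?thesis
      unfolding G'_def[abs_def] G''_def by simp
  qed
  ultimately have H: "hessian (\<lambda>y. G (y \<bullet> y)) x $ i $ j =
     of_real (2 * (if i = j then 1 else 0)) * G' (x \<bullet> x) + of_real (4 * (x $ i * x $ j)) * G'' (x \<bullet> x)"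
    by (rule hessian_radial[OF assms(5)])
  have radial: "(\<lambda>y. hankel1_0 (kp * norm y) - hankel1_0 (ks * norm y)) = (\<lambda>y. G (y \<bullet> y))"
    by (simp add: G_def norm_eq_sqrt_inner)
  have "hankel1_0 (ks * norm x) = H0_sq (ks\<^sup>2 * (x \<bullet> x))"
    using hankel_sq[OF ks(1), of "x \<bullet> x"] assms(5) by (simp add: norm_eq_sqrt_inner)
  then have "Gamma_omega lam mu rho \<omega> x $ i $ j =
     - (\<i> / (4 * complex_of_real mu)) * H0_sq (ks\<^sup>2 * (x \<bullet> x)) * (if i = j then 1 else 0)
     + \<i> / (4 * complex_of_real (\<omega>\<^sup>2 * rho)) *
       (of_real (2 * (if i = j then 1 else 0)) * G' (x \<bullet> x) + of_real (4 * (x $ i * x $ j)) * G'' (x \<bullet> x))"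
    unfolding Gamma_omega_def Let_def ks_def[symmetric] kp_def[symmetric] radial H[symmetric] by simp
  also have "\<dots> = \<i> / of_real (4 * t) * kernel_comb W0 W1 W2 (t / mu) (t / (lam + 2 * mu)) x i j"
  proof -
    define a where "a = t / mu"
    define b where "b = t / (lam + 2 * mu)"
    have s: "x \<bullet> x > 0" using assms(5) by simp
    have args: "ks\<^sup>2 * (x \<bullet> x) = a" "kp\<^sup>2 * (x \<bullet> x) = b"
      unfolding ks(2) kp(2) a_def b_def t_def by simp_all
    have coeffs: "ks\<^sup>2 = a / (x \<bullet> x)" "kp\<^sup>2 = b / (x \<bullet> x)" "\<omega>\<^sup>2 * rho = t / (x \<bullet> x)"
      using s unfolding args[symmetric] t_def by simp_all
    have "mu = t / a" "lam + 2 * mu = t / b" "t \<noteq> 0"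
      using assms s by (simp_all add: a_def b_def t_def)
    then show ?thesis
      unfolding G'_def G''_def kernel_comb_def W0_def W1_def W2_def args coeffs a_def[symmetric] b_def[symmetric]
      using s by (simp add: field_simps power2_eq_square)
  qed
  finally show ?thesis .
qed

section \<open>Small-argument expansion\<close>

definition W0_approx :: "real \<Rightarrow> complex" where
  "W0_approx u = Complex (u - u\<^sup>2 / 4) (2 / pi * (Y0_log u * (u - u\<^sup>2 / 4) + u\<^sup>2 / 4))"

definition W1_approx :: "real \<Rightarrow> complex" where
  "W1_approx u = Complex (- u / 4 + u\<^sup>2 / 32)
     (2 / pi * (1 / 2 + u / 8 - 5 * u\<^sup>2 / 128 + Y0_log u * (- u / 4 + u\<^sup>2 / 32)))"

definition W2_approx :: "real \<Rightarrow> complex" where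
  "W2_approx u = Complex (u\<^sup>2 / 32) (2 / pi * (- 1 / 2 - u / 8 - 3 * u\<^sup>2 / 128 + Y0_log u * u\<^sup>2 / 32))"

lemma J0_coeff_0_1_2: "J0_coeff 0 = 1" "J0_coeff (Suc 0) = - 1 / 4" "J0_coeff 2 = 1 / 64"
  by (simp_all add: J0_coeff_def)

lemma Y0_coeff_0_1_2: "Y0_coeff 0 = 0" "Y0_coeff (Suc 0) = 1 / 4" "Y0_coeff 2 = - 3 / 128"
  by (simp_all add: Y0_coeff_def harm_def numeral_2_eq_2)

lemma diffs_at_0_Suc_0: "diffs c 0 = c (Suc 0)" "diffs c (Suc 0) = 2 * c 2"
  by (simp_all add: diffs_def numeral_2_eq_2)

lemma sum_lessThan_3: "(\<Sum>n<3::nat. f n) = f 0 + f 1 + (f 2 :: real)"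
  by (simp add: numeral_3_eq_3 numeral_2_eq_2 add.assoc)

lemma sum_lessThan_2: "(\<Sum>n<2::nat. f n) = f 0 + (f 1 :: real)"
  by (simp add: numeral_2_eq_2)

lemmas pseries_rem_low_order = pseries_rem_def sum_lessThan_2 sum_lessThan_3 diffs_at_0_Suc_0
  J0_coeff_0_1_2 Y0_coeff_0_1_2

lemma W0_minus_approx:
  "Re (W0 u - W0_approx u) = u * pseries_rem J0_coeff 2 u"
  "Im (W0 u - W0_approx u) =
     2 / pi * (Y0_log u * (u * pseries_rem J0_coeff 2 u) + u * pseries_rem Y0_coeff 2 u)"
  unfolding W0_def W0_approx_def H0_sq_def
  by (simp_all add: pseries_rem_low_order algebra_simps power2_eq_square)

lemma W1_minus_approx:
  assumes "u \<noteq> 0"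
  shows "Re (W1 u - W1_approx u) = u * pseries_rem (diffs J0_coeff) 2 u"
    and "Im (W1 u - W1_approx u) =
     2 / pi * (pseries_rem J0_coeff 3 u / 2 + Y0_log u * (u * pseries_rem (diffs J0_coeff) 2 u)
               + u * pseries_rem (diffs Y0_coeff) 2 u)"
  unfolding W1_def W1_approx_def H0_sq'_def
  using assms by (simp_all add: pseries_rem_low_order field_simps power2_eq_square)

lemma W2_minus_approx:
  assumes "u \<noteq> 0"
  shows "Re (W2 u - W2_approx u) = u\<^sup>2 * pseries_rem (diffs (diffs J0_coeff)) 1 u"
    and "Im (W2 u - W2_approx u) =
     2 / pi * (- pseries_rem J0_coeff 3 u / 2 + u * pseries_rem (diffs J0_coeff) 2 u
               + Y0_log u * (u\<^sup>2 * pseries_rem (diffs (diffs J0_coeff)) 1 u)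
               + u\<^sup>2 * pseries_rem (diffs (diffs Y0_coeff)) 1 u)"
  unfolding W2_def W2_approx_def H0_sq''_def
  using assms by (simp_all add: pseries_rem_low_order field_simps power2_eq_square)

lemma bigo_complex_if_Re_Im:
  fixes f :: "'a \<Rightarrow> complex"
  assumes "(\<lambda>x. Re (f x)) \<in> O[F](g)" "(\<lambda>x. Im (f x)) \<in> O[F](g)"
  shows "f \<in> O[F](\<lambda>x. of_real (g x))"
proof -
  have "(\<lambda>x. of_real (Re (f x)) + \<i> * of_real (Im (f x))) \<in> O[F](\<lambda>x. of_real (g x))"
    using assms by (intro sum_in_bigo) (simp_all add: landau_o.big.of_real_iff)
  then show ?thesis by (simp add: complex_eq[symmetric])
qed

lemma pseries_rem_cubic_bigo:
  assumes "entire_coeffs c"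
  shows "pseries_rem c 3 \<in> O[at_right 0](\<lambda>u. u ^ 3)"
    and "(\<lambda>u. u * pseries_rem c 2 u) \<in> O[at_right 0](\<lambda>u. u ^ 3)"
    and "(\<lambda>u. u\<^sup>2 * pseries_rem c 1 u) \<in> O[at_right 0](\<lambda>u. u ^ 3)"
proof -
  have *: "(\<lambda>u. u ^ k * pseries_rem c m u) \<in> O[at_right 0](\<lambda>u. u ^ (k + m))" for k m
    using landau_o.big.mult_left[OF pseries_rem_bigo[OF assms], where h = "\<lambda>u. u ^ k"]
    by (simp add: power_add)
  show "pseries_rem c 3 \<in> O[at_right 0](\<lambda>u. u ^ 3)"
    by (rule pseries_rem_bigo[OF assms])
  show "(\<lambda>u. u * pseries_rem c 2 u) \<in> O[at_right 0](\<lambda>u. u ^ 3)"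
    using *[of 1 2] by (simp add: power3_eq_cube mult.assoc)
  show "(\<lambda>u. u\<^sup>2 * pseries_rem c 1 u) \<in> O[at_right 0](\<lambda>u. u ^ 3)"
    using *[of 2 1] by (simp add: power3_eq_cube power2_eq_square mult.assoc)
qed

lemma cubic_bigo_imp_cubic_log_bigo:
  fixes f :: "real \<Rightarrow> real"
  assumes "f \<in> O[at_right 0](\<lambda>u. u ^ 3)"
  shows "f \<in> O[at_right 0](\<lambda>u. u ^ 3 * ln u)"
    and "(\<lambda>u. Y0_log u * f u) \<in> O[at_right 0](\<lambda>u. u ^ 3 * ln u)"
proof -
  show "f \<in> O[at_right 0](\<lambda>u. u ^ 3 * ln u)"
    by (rule landau_o.big_trans[OF assms]) real_asymp
  have "Y0_log \<in> O[at_right 0](ln)"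
    unfolding Y0_log_def by real_asymp
  from landau_o.big.mult[OF this assms]
  show "(\<lambda>u. Y0_log u * f u) \<in> O[at_right 0](\<lambda>u. u ^ 3 * ln u)"
    by (simp add: mult.commute)
qed

lemmas cubic_remainders =
  pseries_rem_cubic_bigo[THEN cubic_bigo_imp_cubic_log_bigo(1)]
  pseries_rem_cubic_bigo[THEN cubic_bigo_imp_cubic_log_bigo(2)]

lemma bigo_at_right_0_cong:
  fixes f g h :: "real \<Rightarrow> real"
  assumes "\<And>u. u > 0 \<Longrightarrow> f u = g u" "g \<in> O[at_right 0](h)"
  shows "f \<in> O[at_right 0](h)"
proof -
  have "\<forall>\<^sub>F u in at_right 0. f u = g u"
    by (rule eventually_mono[OF eventually_at_right_less[of 0]]) (simp add: assms(1))
  with assms(2) show ?thesis by (simp add: landau_o.big.in_cong)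
qed

lemmas remainder_bigo_intros = sum_in_bigo cubic_remainders entire_coeffs_J0_Y0

lemma W0_remainder_bigo: "(\<lambda>u. W0 u - W0_approx u) \<in> O[at_right 0](\<lambda>u. of_real (u ^ 3 * ln u))"
  by (rule bigo_complex_if_Re_Im; simp only: W0_minus_approx) (auto intro!: remainder_bigo_intros)

lemma W1_remainder_bigo: "(\<lambda>u. W1 u - W1_approx u) \<in> O[at_right 0](\<lambda>u. of_real (u ^ 3 * ln u))"
  by (rule bigo_complex_if_Re_Im; rule bigo_at_right_0_cong, rule W1_minus_approx)
     (auto intro!: remainder_bigo_intros)

lemma W2_remainder_bigo: "(\<lambda>u. W2 u - W2_approx u) \<in> O[at_right 0](\<lambda>u. of_real (u ^ 3 * ln u))"
  by (rule bigo_complex_if_Re_Im; rule bigo_at_right_0_cong, rule W2_minus_approx)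
     (auto intro!: remainder_bigo_intros simp del: One_nat_def)

lemma E_c_eq: "E_c = Complex (2 * euler_mascheroni - 2 * ln 2) (- pi)"
proof -
  have "Ln (2::complex) = of_real (ln 2)" "(euler_mascheroni :: complex) = of_real euler_mascheroni"
    using Ln_of_real[of 2] by simp_all
  then show ?thesis
    unfolding E_c_def by (simp add: complex_eq_iff del: of_real_euler_mascheroni)
qed

lemma lame_expansion_entry_eq:
  fixes lam mu \<kappa> :: real and x :: "real^2"
  assumes "mu > 0" "lam + 2 * mu > 0" "\<kappa> > 0" "x \<noteq> 0"
  defines "t \<equiv> \<kappa>\<^sup>2 * (x \<bullet> x)"
  shows "Gamma0 lam mu x $ i $ j + (alpha1 lam mu * ln \<kappa> + alpha_const lam mu) * (if i = j then 1 else 0)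
           + \<kappa>\<^sup>2 * ln \<kappa> * Gamma1 lam mu x $ i $ j + \<kappa>\<^sup>2 * Gamma2 lam mu x $ i $ j
    = \<i> / of_real (4 * t) * kernel_comb W0_approx W1_approx W2_approx (t / mu) (t / (lam + 2 * mu)) x i j"
proof -
  define s where "s = x \<bullet> x"
  define n where "n = lam + 2 * mu"
  have s: "s > 0" "(norm x)\<^sup>2 = s" using assms(4) by (simp_all add: s_def power2_norm_eq_inner)
  have n: "n > 0" "2 * mu + lam = n" "lam + 2 * mu = n" using assms(2) by (simp_all add: n_def)
  have t: "t = \<kappa>\<^sup>2 * s" by (simp add: t_def s_def)
  define a where "a = 1 / mu"
  define b where "b = 1 / n"
  have ab: "mu = 1 / a" "n = 1 / b" "a > 0" "b > 0" "ln mu = - ln a" "ln n = - ln b"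
    using assms(1) n(1) by (simp_all add: a_def b_def ln_div)
  have logs: "ln (t / mu) = 2 * ln \<kappa> + ln s - ln mu" "ln (t / n) = 2 * ln \<kappa> + ln s - ln n"
    "ln (norm x) = ln s / 2"
    using assms s n unfolding t by (simp_all add: ln_mult ln_div ln_sqrt ln_realpow norm_eq_sqrt_inner s_def)
  (* In terms of a = 1/mu and b = 1/(lam + 2 mu) the only denominators left are pi, s and kappa,
     which keeps the normalisation by field_simps small. *)
  show ?thesis
    unfolding Gamma0_def Gamma1_def Gamma2_def alpha_const_def beta1_def beta4_def E_c_eq
      alpha1_def alpha2_def beta2_def beta3_def
      kernel_comb_def W0_approx_def W1_approx_def W2_approx_def Y0_log_def n logs s(2)
    unfolding t s_def[symmetric] ab(5,6)
    unfolding ab(1,2)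
    using ab(3,4) assms(3) s(1)
    by (simp add: complex_eq_iff) (intro conjI impI; simp add: field_simps power2_eq_square)
qed

section \<open>The remainder estimate\<close>

lemma remainder_at_scaled_square_bigo:
  fixes R :: "real \<Rightarrow> complex"
  assumes "R \<in> O[at_right 0](\<lambda>u. of_real (u ^ 3 * ln u))" "k > 0"
  shows "(\<lambda>\<omega>. R (k * \<omega>\<^sup>2) / of_real (\<omega>\<^sup>2)) \<in> O[at_right 0](\<lambda>\<omega>. of_real (\<omega> ^ 4 * ln \<omega>))"
proof -
  have "filterlim (\<lambda>\<omega>. k * \<omega>\<^sup>2) (at_right 0) (at_right 0)"
    using assms(2) by real_asymp
  from landau_o.big.compose[OF assms(1) this]
  have "(\<lambda>\<omega>. R (k * \<omega>\<^sup>2)) \<in> O[at_right 0](\<lambda>\<omega>. of_real ((k * \<omega>\<^sup>2) ^ 3 * ln (k * \<omega>\<^sup>2)))" .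
  also have "(\<lambda>\<omega>. of_real ((k * \<omega>\<^sup>2) ^ 3 * ln (k * \<omega>\<^sup>2)) :: complex)
      \<in> O[at_right 0](\<lambda>\<omega>. of_real (\<omega> ^ 4 * ln \<omega>) * of_real (\<omega>\<^sup>2))"
    unfolding of_real_mult[symmetric] landau_o.big.of_real_iff using assms(2) by real_asymp
  finally have "(\<lambda>\<omega>. R (k * \<omega>\<^sup>2)) \<in> O[at_right 0](\<lambda>\<omega>. of_real (\<omega> ^ 4 * ln \<omega>) * of_real (\<omega>\<^sup>2))" .
  moreover have "\<forall>\<^sub>F \<omega> in at_right 0. (of_real (\<omega>\<^sup>2) :: complex) \<noteq> 0"
    by (rule eventually_mono[OF eventually_at_right_less[of "0::real"]]) simp
  ultimately show ?thesis by (simp add: landau_o.big.divide_eq2)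
qed

lemma kernel_comb_divide:
  "kernel_comb F0 F1 F2 us up x i j / c =
   kernel_comb (\<lambda>u. F0 u / c) (\<lambda>u. F1 u / c) (\<lambda>u. F2 u / c) us up x i j"
  unfolding kernel_comb_def
  by (simp add: algebra_simps diff_divide_distrib add_divide_distrib del: of_real_divide of_real_mult)

lemmas const_mult_in_bigo = cmult_in_bigo_iff[THEN iffD2, OF disjI2]

lemma kernel_comb_remainder_bigo:
  assumes "k\<^sub>s > 0" "k\<^sub>p > 0"
  shows "(\<lambda>\<omega>. kernel_comb (\<lambda>u. W0 u - W0_approx u) (\<lambda>u. W1 u - W1_approx u) (\<lambda>u. W2 u - W2_approx u)
            (k\<^sub>s * \<omega>\<^sup>2) (k\<^sub>p * \<omega>\<^sup>2) x i j / of_real (\<omega>\<^sup>2))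
         \<in> O[at_right 0](\<lambda>\<omega>. of_real (\<omega> ^ 4 * ln \<omega>))"
  by (subst kernel_comb_divide, unfold kernel_comb_def)
     (intro sum_in_bigo const_mult_in_bigo remainder_at_scaled_square_bigo assms
        W0_remainder_bigo W1_remainder_bigo W2_remainder_bigo)

lemma Gamma_omega_scaled_entry_eq:
  fixes lam mu rho \<delta> \<epsilon> \<omega> :: real and x :: "real^2"
  assumes "mu > 0" "lam + 2 * mu > 0" "rho > 0" "\<delta> > 0" "\<epsilon> > 0" "\<omega> > 0" "x \<noteq> 0"
  defines "t \<equiv> (sqrt rho * sqrt (\<delta> / \<epsilon>) * \<omega>)\<^sup>2 * (x \<bullet> x)"
  shows "Gamma_omega (lam / \<delta>) (mu / \<delta>) (rho / \<epsilon>) \<omega> x $ i $ j =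
    \<delta> * (\<i> / of_real (4 * t) * kernel_comb W0 W1 W2 (t / mu) (t / (lam + 2 * mu)) x i j)"
proof -
  have t: "\<omega>\<^sup>2 * (rho / \<epsilon>) * (x \<bullet> x) = t / \<delta>"
    using assms(3-5) by (simp add: t_def power_mult_distrib)
  have args: "t / \<delta> / (mu / \<delta>) = t / mu" "t / \<delta> / (lam / \<delta> + 2 * (mu / \<delta>)) = t / (lam + 2 * mu)"
    using assms(4) by (simp_all add: field_simps)
  have "mu / \<delta> > 0" "lam / \<delta> + 2 * (mu / \<delta>) > 0" "rho / \<epsilon> > 0"
    using assms(1-5) by (simp_all add: add_divide_distrib[symmetric])
  from Gamma_omega_entry_eq[OF this assms(6,7), of i j]
  have "Gamma_omega (lam / \<delta>) (mu / \<delta>) (rho / \<epsilon>) \<omega> x $ i $ j =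
    \<i> / of_real (4 * (t / \<delta>)) * kernel_comb W0 W1 W2 (t / mu) (t / (lam + 2 * mu)) x i j"
    unfolding t args .
  then show ?thesis using assms(4) by simp
qed

lemma norm_vec_le_sum_norm: "norm (v :: 'a::real_normed_vector ^ 'n) \<le> (\<Sum>i\<in>UNIV. norm (v $ i))"
  by (simp add: norm_vec_def L2_set_le_sum)

lemma norm_matrix_bigo:
  fixes M :: "'a \<Rightarrow> complex^'n^'m"
  assumes "\<And>i j. (\<lambda>\<omega>. M \<omega> $ i $ j) \<in> O[F](\<lambda>\<omega>. of_real (g \<omega>))"
  shows "(\<lambda>\<omega>. norm (M \<omega>)) \<in> O[F](g)"
proof -
  have "(\<lambda>\<omega>. norm (M \<omega> $ i $ j)) \<in> O[F](g)" for i j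
    using assms[of i j] landau_o.big.norm_iff[of "\<lambda>\<omega>. M \<omega> $ i $ j" F "\<lambda>\<omega>. of_real (g \<omega>)"] by simp
  then have sum: "(\<lambda>\<omega>. \<Sum>i\<in>UNIV. \<Sum>j\<in>UNIV. norm (M \<omega> $ i $ j)) \<in> O[F](g)"
    by (intro big_sum_in_bigo)
  have "norm (M \<omega>) \<le> (\<Sum>i\<in>UNIV. \<Sum>j\<in>UNIV. norm (M \<omega> $ i $ j))" for \<omega>
    by (rule order_trans[OF norm_vec_le_sum_norm sum_mono[OF norm_vec_le_sum_norm]])
  then have "(\<lambda>\<omega>. norm (M \<omega>)) \<in> O[F](\<lambda>\<omega>. \<Sum>i\<in>UNIV. \<Sum>j\<in>UNIV. norm (M \<omega> $ i $ j))"
    by (intro landau_o.big_mono always_eventually) (auto intro: order_trans[OF _ abs_ge_self])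
  from landau_o.big_trans[OF this sum] show ?thesis .
qed

(* E is left abstract so that the main theorem can instantiate it with its explicit matrix by unification. *)

lemma Gamma_omega_scaled_approx_bound:
  fixes lam mu rho \<delta> \<epsilon> :: real and x :: "real^2" and E :: "real \<Rightarrow> complex^2^2"
  assumes "mu > 0" "lam + 2 * mu > 0" "rho > 0" "\<delta> > 0" "\<epsilon> > 0" "x \<noteq> 0"
  defines "t \<equiv> \<lambda>\<omega>. (sqrt rho * sqrt (\<delta> / \<epsilon>) * \<omega>)\<^sup>2 * (x \<bullet> x)"
  assumes E: "\<And>\<omega> i j. \<omega> > 0 \<Longrightarrow> E \<omega> $ i $ j =
    \<delta> * (\<i> / of_real (4 * t \<omega>) * kernel_comb W0_approx W1_approx W2_approx (t \<omega> / mu) (t \<omega> / (lam + 2 * mu)) x i j)"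
  shows "\<exists>C. \<forall>\<^sub>F \<omega> in at_right 0. norm (Gamma_omega (lam / \<delta>) (mu / \<delta>) (rho / \<epsilon>) \<omega> x - E \<omega>)
    \<le> C * \<bar>\<delta> * sqrt (\<delta> / \<epsilon>) ^ 4 * \<omega> ^ 4 * ln \<omega> + \<delta> * sqrt (\<delta> / \<epsilon>) ^ 4 * \<omega> ^ 4\<bar>"
proof -
  define \<tau> where "\<tau> = sqrt (\<delta> / \<epsilon>)"
  define k where "k = rho * \<tau>\<^sup>2 * (x \<bullet> x)"
  have pos: "\<tau> > 0" "k > 0" "k / mu > 0" "k / (lam + 2 * mu) > 0"
    using assms(1-6) by (simp_all add: \<tau>_def k_def)
  have t: "t \<omega> = k * \<omega>\<^sup>2" for \<omega>
    using assms(3-5) by (simp add: t_def k_def \<tau>_def power_mult_distrib)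
  have remainder_eq: "\<forall>\<^sub>F \<omega> in at_right 0. (Gamma_omega (lam / \<delta>) (mu / \<delta>) (rho / \<epsilon>) \<omega> x - E \<omega>) $ i $ j =
      \<delta> * \<i> / of_real (4 * k) * (kernel_comb (\<lambda>u. W0 u - W0_approx u) (\<lambda>u. W1 u - W1_approx u)
        (\<lambda>u. W2 u - W2_approx u) (k / mu * \<omega>\<^sup>2) (k / (lam + 2 * mu) * \<omega>\<^sup>2) x i j / of_real (\<omega>\<^sup>2))" for i j
  proof (rule eventually_mono[OF eventually_at_right_less[of "0::real"]])
    fix \<omega> :: real assume "\<omega> > 0"
    have args: "k * \<omega>\<^sup>2 / mu = k / mu * \<omega>\<^sup>2" "k * \<omega>\<^sup>2 / (lam + 2 * mu) = k / (lam + 2 * mu) * \<omega>\<^sup>2"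
      by simp_all
    from Gamma_omega_scaled_entry_eq[OF assms(1-5) \<open>\<omega> > 0\<close> assms(6), of i j] E[OF \<open>\<omega> > 0\<close>, of i j]
    show "(Gamma_omega (lam / \<delta>) (mu / \<delta>) (rho / \<epsilon>) \<omega> x - E \<omega>) $ i $ j = \<delta> * \<i> / of_real (4 * k) *
        (kernel_comb (\<lambda>u. W0 u - W0_approx u) (\<lambda>u. W1 u - W1_approx u) (\<lambda>u. W2 u - W2_approx u)
          (k / mu * \<omega>\<^sup>2) (k / (lam + 2 * mu) * \<omega>\<^sup>2) x i j / of_real (\<omega>\<^sup>2))"
      using \<open>\<omega> > 0\<close> pos(2) unfolding t_def t[unfolded t_def] args kernel_comb_diff[symmetric]
      by (simp add: field_simps)
  qed
  have "(\<lambda>\<omega>. norm (Gamma_omega (lam / \<delta>) (mu / \<delta>) (rho / \<epsilon>) \<omega> x - E \<omega>))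
      \<in> O[at_right 0](\<lambda>\<omega>. \<omega> ^ 4 * ln \<omega>)"
  proof (rule norm_matrix_bigo)
    fix i j
    show "(\<lambda>\<omega>. (Gamma_omega (lam / \<delta>) (mu / \<delta>) (rho / \<epsilon>) \<omega> x - E \<omega>) $ i $ j)
        \<in> O[at_right 0](\<lambda>\<omega>. of_real (\<omega> ^ 4 * ln \<omega>))"
      by (rule landau_o.big.in_cong[OF remainder_eq, THEN iffD2])
         (rule const_mult_in_bigo[OF kernel_comb_remainder_bigo[OF pos(3,4)]])
  qed
  also have "(\<lambda>\<omega>. \<omega> ^ 4 * ln \<omega>) \<in> O[at_right 0](\<lambda>\<omega>. \<delta> * \<tau> ^ 4 * \<omega> ^ 4 * ln \<omega> + \<delta> * \<tau> ^ 4 * \<omega> ^ 4)"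
  proof -
    have "(\<lambda>\<omega>::real. \<omega> ^ 4 * ln \<omega>) \<in> O[at_right 0](\<lambda>\<omega>. \<omega> ^ 4 * ln \<omega> + \<omega> ^ 4)"
      by real_asymp
    moreover have "(\<lambda>\<omega>. \<delta> * \<tau> ^ 4 * \<omega> ^ 4 * ln \<omega> + \<delta> * \<tau> ^ 4 * \<omega> ^ 4) =
        (\<lambda>\<omega>. (\<delta> * \<tau> ^ 4) * (\<omega> ^ 4 * ln \<omega> + \<omega> ^ 4))"
      by (simp add: algebra_simps)
    ultimately show ?thesis using assms(4) pos(1) by simp
  qed
  finally show ?thesis
    unfolding \<tau>_def by (elim landau_o.bigE) auto
qed

theorem proposition2p3:
  fixes lam mu rho \<delta> \<epsilon> :: real and x :: "real^2"
  assumes "mu > 0" and "lam + 2 * mu > 0" and "rho > 0"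
    and "\<delta> > 0" and "\<epsilon> > 0" and "x \<noteq> 0"
  shows "let \<tau> = sqrt (\<delta> / \<epsilon>) in
    \<exists>C. \<forall>\<^sub>F \<omega> in at_right 0.
      norm (Gamma_omega (lam / \<delta>) (mu / \<delta>) (rho / \<epsilon>) \<omega> x
        - (\<chi> i j.
             \<delta> * Gamma0 lam mu x $ i $ j
           + \<delta> * (alpha1 lam mu * ln (sqrt rho * \<tau> * \<omega>) + alpha_const lam mu)
               * (if i = j then 1 else 0)
           + \<delta> * \<omega>^2 * ln \<omega> * rho * \<tau>^2 * Gamma1 lam mu x $ i $ j
           + \<delta> * \<omega>^2 * rho * \<tau>^2 * ln (sqrt rho * \<tau>) * Gamma1 lam mu x $ i $ j
           + \<delta> * \<omega>^2 * rho * \<tau>^2 * Gamma2 lam mu x $ i $ j))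
      \<le> C * \<bar>\<delta> * \<tau>^4 * \<omega>^4 * ln \<omega> + \<delta> * \<tau>^4 * \<omega>^4\<bar>"
  unfolding Let_def
proof (rule Gamma_omega_scaled_approx_bound[OF assms], goal_cases)
  case (1 \<omega> i j)
  let ?\<kappa> = "sqrt rho * sqrt (\<delta> / \<epsilon>) * \<omega>"
  have "?\<kappa> > 0" "?\<kappa>\<^sup>2 = \<omega>\<^sup>2 * rho * sqrt (\<delta> / \<epsilon>) ^ 2"
    "ln ?\<kappa> = ln \<omega> + ln (sqrt rho * sqrt (\<delta> / \<epsilon>))"
    using assms \<open>\<omega> > 0\<close> by (simp_all add: power_mult_distrib ln_mult)
  moreover have "(complex_of_real (sqrt rho))\<^sup>2 = of_real rho"
    using assms(3) by (simp flip: of_real_power)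
  ultimately show ?case
    unfolding lame_expansion_entry_eq[OF assms(1,2) \<open>?\<kappa> > 0\<close> assms(6), symmetric]
    by (simp add: algebra_simps)
qed

end
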